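(* For every strategy profile $s$ with $S_0(s)\vee S_1(s)$: if $\mathsf{SPE}(s)$ then $\mathsf{SAcBes}(s)\vee\mathsf{SBcAes}(s)$.
   Context: Let $P=\{A,B\}$ and $\mathrm{Choice}=\{d,r\}$; a payoff function is $f:P\to\mathbb{R}$. Strategy profiles are elements of the final coalgebra of $X\mapsto\mathbb{R}^P+P\times\mathrm{Choice}\times X\times X$ (finite or infinite trees $\langle f\rangle$ or $\langle p,c,s_d,s_r\rangle$, equality being bisimilarity). The payoff $\widehat{s}$ is the partial function given by $\widehat{\langle f\rangle}=f$, $\widehat{\langle p,d,s_d,s_r\rangle}=\widehat{s_d}$, $\widehat{\langle p,r,s_d,s_r\rangle}=\widehat{s_r}$. Convergence $\downarrow$: least predicate with $\downarrow(s)$ iff $s=\langle f\rangle$, or $s=\langle p,d,s_d,s_r\rangle\wedge\downarrow(s_d)$, or $s=\langle p,r,s_d,s_r\rangle\wedge\downarrow(s_r)$. Strong convergence $\Downarrow$: greatest predicate with $\Downarrow(s)$ iff $s=\langle f\rangle$, or $s=\langle p,c,s_d,s_r\rangle$ with $\downarrow(s),\Downarrow(s_d),\Downarrow(s_r)$. For a predicate $\Phi$, $\Box\Phi$ is the greatest predicate such that $\Box\Phi(s)$ iff $\Phi(s)$ and, whenever $s=\langle p,c,s_d,s_r\rangle$, $\Box\Phi(s_d)$ and $\Box\Phi(s_r)$. $\mathsf{PE}(s)$ holds iff $\Downarrow(s)$ and (if $s=\langle p,d,s_d,s_r\rangle$ then $\widehat{s_d}(p)\ge\widehat{s_r}(p)$)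 and (if $s=\langle p,r,s_d,s_r\rangle$ then $\widehat{s_r}(p)\ge\widehat{s_d}(p)$); $\mathsf{SPE}=\Box\,\mathsf{PE}$. Let $f_{0,1}=(A\mapsto0,B\mapsto1)$, $f_{1,0}=(A\mapsto1,B\mapsto0)$. $S_0,S_1$ are the greatest predicates with $S_0(s)$ iff $s=\langle A,c,\langle f_{0,1}\rangle,s'\rangle$ with $S_1(s')$, and $S_1(s)$ iff $s=\langle B,c,\langle f_{1,0}\rangle,s'\rangle$ with $S_0(s')$. $\mathsf{AcBes}$ is the least predicate such that $\mathsf{AcBes}(s)$ holds iff: whenever $s=\langle p,c,\langle f\rangle,s'\rangle$, then ($p=A$, $f=f_{0,1}$, $c=r$, $\mathsf{AcBes}(s')$) or ($p=B$, $f=f_{1,0}$, and ($c=d$ or $\mathsf{AcBes}(s')$)). Symmetrically $\mathsf{BcAes}$ is the least predicate such that $\mathsf{BcAes}(s)$ holds iff: whenever $s=\langle p,c,\langle f\rangle,s'\rangle$, then ($p=B$, $f=f_{1,0}$, $c=r$, $\mathsf{BcAes}(s')$) or ($p=A$, $f=f_{0,1}$, and ($c=d$ or $\mathsf{BcAes}(s')$)). $\mathsf{SAcBes}=\Box\,\mathsf{AcBes}$ and $\mathsf{SBcAes}=\Box\,\mathsf{BcAes}$. *)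

theory Defs
  imports Complex_Main
begin

datatype player = A | B
datatype choice = d | r

codatatype strat = Leaf "player \<Rightarrow> real" | Node player choice strat strat

inductive conv :: "strat \<Rightarrow> bool" where
  conv_leaf: "conv (Leaf f)"
| conv_d: "conv sd \<Longrightarrow> conv (Node p d sd sr)"
| conv_r: "conv sr \<Longrightarrow> conv (Node p r sd sr)"

(* graph of the partial payoff function \<hat>s *)
inductive payoff_of :: "strat \<Rightarrow> (player \<Rightarrow> real) \<Rightarrow> bool" where
  "payoff_of (Leaf f) f"
| "payoff_of sd f \<Longrightarrow> payoff_of (Node p d sd sr) f"
| "payoff_of sr f \<Longrightarrow> payoff_of (Node p r sd sr) f"

definition payoff :: "strat \<Rightarrow> player \<Rightarrow> real" where
  "payoff s = (THE f. payoff_of s f)"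

coinductive sconv :: "strat \<Rightarrow> bool" where
  sconv_leaf: "sconv (Leaf f)"
| sconv_node: "conv (Node p c sd sr) \<Longrightarrow> sconv sd \<Longrightarrow> sconv sr \<Longrightarrow> sconv (Node p c sd sr)"

coinductive Always :: "(strat \<Rightarrow> bool) \<Rightarrow> strat \<Rightarrow> bool" for \<Phi> where
  "\<Phi> s \<Longrightarrow> (\<forall>p c sd sr. s = Node p c sd sr \<longrightarrow> Always \<Phi> sd \<and> Always \<Phi> sr)
   \<Longrightarrow> Always \<Phi> s"

definition PE :: "strat \<Rightarrow> bool" where
  "PE s \<longleftrightarrow> sconv s
     \<and> (\<forall>p sd sr. s = Node p d sd sr \<longrightarrow> payoff sd p \<ge> payoff sr p)
     \<and> (\<forall>p sd sr. s = Node p r sd sr \<longrightarrow> payoff sr p \<ge> payoff sd p)"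

definition SPE :: "strat \<Rightarrow> bool" where
  "SPE = Always PE"

definition f01 :: "player \<Rightarrow> real" where
  "f01 = (\<lambda>x. if x = A then 0 else 1)"

definition f10 :: "player \<Rightarrow> real" where
  "f10 = (\<lambda>x. if x = A then 1 else 0)"

coinductive S0 :: "strat \<Rightarrow> bool" and S1 :: "strat \<Rightarrow> bool" where
  "S1 s' \<Longrightarrow> S0 (Node A c (Leaf f01) s')"
| "S0 s' \<Longrightarrow> S1 (Node B c (Leaf f10) s')"

inductive AcBes :: "strat \<Rightarrow> bool" where
  "(\<forall>p c f s'. s = Node p c (Leaf f) s' \<longrightarrow>
      (p = A \<and> f = f01 \<and> c = r \<and> AcBes s') \<or>
      (p = B \<and> f = f10 \<and> (c = d \<or> AcBes s'))) \<Longrightarrow> AcBes s"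
monos imp_mono

inductive BcAes :: "strat \<Rightarrow> bool" where
  "(\<forall>p c f s'. s = Node p c (Leaf f) s' \<longrightarrow>
      (p = B \<and> f = f10 \<and> c = r \<and> BcAes s') \<or>
      (p = A \<and> f = f01 \<and> (c = d \<or> BcAes s'))) \<Longrightarrow> BcAes s"
monos imp_mono

definition SAcBes :: "strat \<Rightarrow> bool" where
  "SAcBes = Always AcBes"

definition SBcAes :: "strat \<Rightarrow> bool" where
  "SBcAes = Always BcAes"

end

theory Submission
  imports Defs
begin

text \<open>On any comb in which every node offers its mover a losing leaf, a subgame perfect
  equilibrium converges, so the play ends in a leaf where some player Q loses. The payoff of
  Q stays 0 at every node of the spine: the other player never stops there, since stopping
  would give Q the payoff 1, and where Q stops, equilibrium says that continuing would not
  have given Q more than 0. A convergent comb on which one player never stops is exactly one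
  where that player continues and the other eventually stops.\<close>

lemma payoff_Leaf [simp]: "payoff (Leaf f) = f"
  unfolding payoff_def
  by (rule the_equality) (auto intro: payoff_of.intros elim: payoff_of.cases)

lemma payoff_Node_d [simp]: "payoff (Node p d sd sr) = payoff sd"
proof -
  have "payoff_of (Node p d sd sr) = payoff_of sd"
    by (rule ext) (auto intro: payoff_of.intros elim: payoff_of.cases)
  then show ?thesis unfolding payoff_def by simp
qed

lemma payoff_Node_r [simp]: "payoff (Node p r sd sr) = payoff sr"
proof -
  have "payoff_of (Node p r sd sr) = payoff_of sr"
    by (rule ext) (auto intro: payoff_of.intros elim: payoff_of.cases)
  then show ?thesis unfolding payoff_def by simp
qed

lemma AlwaysD: "Always \<Phi> s \<Longrightarrow> \<Phi> s"
  by (erule Always.cases) auto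

lemma Always_NodeD: "Always \<Phi> (Node p c sd sr) \<Longrightarrow> Always \<Phi> sd \<and> Always \<Phi> sr"
  by (erule Always.cases) auto

lemma Always_Leaf: "\<Phi> (Leaf f) \<Longrightarrow> Always \<Phi> (Leaf f)"
  by (rule Always.intros) auto

lemma SPE_PE: "SPE s \<Longrightarrow> PE s"
  unfolding SPE_def by (rule AlwaysD)

lemma SPE_NodeD: "SPE (Node p c sd sr) \<Longrightarrow> SPE sd \<and> SPE sr"
  unfolding SPE_def by (rule Always_NodeD)

lemma SPE_conv: "SPE s \<Longrightarrow> conv s"
  by (drule SPE_PE) (auto simp: PE_def elim: sconv.cases intro: conv.intros)

definition loses :: "player \<Rightarrow> player \<Rightarrow> real" where
  "loses q = (\<lambda>x. if x = q then 0 else 1)"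

lemma f01_eq_loses_A: "f01 = loses A"
  by (simp add: f01_def loses_def)

lemma f10_eq_loses_B: "f10 = loses B"
proof
  show "f10 x = loses B x" for x by (cases x) (simp_all add: f10_def loses_def)
qed

text \<open>Unlike in \<open>S0\<close> and \<open>S1\<close>, the movers of a comb need not alternate.\<close>

coinductive comb :: "strat \<Rightarrow> bool" where
  "comb s' \<Longrightarrow> comb (Node p c (Leaf (loses p)) s')"

inductive_simps comb_Leaf [simp]: "comb (Leaf f)"
inductive_simps comb_Node [simp]: "comb (Node p c sd s')"

lemma comb_if_S0_or_S1: "S0 s \<or> S1 s \<Longrightarrow> comb s"
  by (coinduction arbitrary: s)
    (auto simp: f01_eq_loses_A f10_eq_loses_B elim: S0.cases S1.cases)

lemma payoff_conv_comb: "conv s \<Longrightarrow> comb s \<Longrightarrow> \<exists>q. payoff s = loses q"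
  by (induction rule: conv.induct) auto

definition continues :: "player \<Rightarrow> strat \<Rightarrow> bool" where
  "continues p s \<longleftrightarrow> (\<forall>c sd sr. s = Node p c sd sr \<longrightarrow> c = r)"

lemma Always_along_comb:
  assumes "comb s" "SPE s" "I s"
    and step: "\<And>p c s'. SPE (Node p c (Leaf (loses p)) s') \<Longrightarrow>
                 I (Node p c (Leaf (loses p)) s') \<Longrightarrow> I s'"
    and holds: "\<And>s. comb s \<Longrightarrow> SPE s \<Longrightarrow> I s \<Longrightarrow> \<Phi> s"
    and leaf: "\<And>f. \<Phi> (Leaf f)"
  shows "Always \<Phi> s"
  using assms(1-3)
proof (coinduction arbitrary: s)
  case (Always s)
  then obtain p c s' where s: "s = Node p c (Leaf (loses p)) s'" and "comb s'"
    by (auto elim: comb.cases)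
  moreover have "SPE s'" using Always(2) s SPE_NodeD by blast
  moreover have "I s'" using Always(2,3) s step by blast
  ultimately show ?case using Always holds by (auto intro: Always_Leaf leaf)
qed

lemma continues_if_other_payoff_nonpos:
  assumes "payoff (Node p c (Leaf (loses p)) s') q \<le> 0" "p \<noteq> q"
  shows "c = r"
  using assms by (cases c) (auto simp: loses_def)

lemma payoff_nonpos_tail_if_PE:
  assumes pe: "PE (Node p c (Leaf (loses p)) s')"
    and le: "payoff (Node p c (Leaf (loses p)) s') q \<le> 0"
  shows "payoff s' q \<le> 0"
proof (cases c)
  case d
  then have "p = q" using le continues_if_other_payoff_nonpos by blast
  with d pe show ?thesis by (auto simp: PE_def loses_def)
next
  case r
  with le show ?thesis by simp
qed

lemma Always_continues_if_payoff_nonpos: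
  assumes "comb s" "SPE s" "payoff s q \<le> 0" "p \<noteq> q"
  shows "Always (continues p) s"
  using assms(1-3)
proof (rule Always_along_comb)
  show "payoff s' q \<le> 0"
    if "SPE (Node p' c (Leaf (loses p')) s')"
       "payoff (Node p' c (Leaf (loses p')) s') q \<le> 0" for p' c s'
    using that SPE_PE payoff_nonpos_tail_if_PE by blast
  show "continues p s" if "comb s" "payoff s q \<le> 0" for s
    using that assms(4) continues_if_other_payoff_nonpos
    by (auto simp: continues_def elim: comb.cases)
qed (simp add: continues_def)

inductive_simps AcBes_Leaf [simp]: "AcBes (Leaf f)"
inductive_simps BcAes_Leaf [simp]: "BcAes (Leaf f)"
inductive_simps AcBes_Node_Leaf: "AcBes (Node p c (Leaf f) s')"
inductive_simps BcAes_Node_Leaf: "BcAes (Node p c (Leaf f) s')"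

lemma AcBes_if_A_continues:
  "conv s \<Longrightarrow> comb s \<Longrightarrow> Always (continues A) s \<Longrightarrow> AcBes s"
proof (induction rule: conv.induct)
  case (conv_leaf f)
  show ?case by simp
next
  case (conv_d sd p sr)
  have "continues A (Node p d sd sr)" using conv_d.prems(2) by (rule AlwaysD)
  with conv_d.prems(1) show ?case
    by (cases p) (simp_all add: AcBes_Node_Leaf continues_def f01_eq_loses_A f10_eq_loses_B)
next
  case (conv_r sr p sd)
  have "AcBes sr" using conv_r.prems by (auto dest: Always_NodeD intro: conv_r.IH)
  with conv_r.prems(1) show ?case
    by (cases p) (simp_all add: AcBes_Node_Leaf f01_eq_loses_A f10_eq_loses_B)
qed

lemma BcAes_if_B_continues:
  "conv s \<Longrightarrow> comb s \<Longrightarrow> Always (continues B) s \<Longrightarrow> BcAes s"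
proof (induction rule: conv.induct)
  case (conv_leaf f)
  show ?case by simp
next
  case (conv_d sd p sr)
  have "continues B (Node p d sd sr)" using conv_d.prems(2) by (rule AlwaysD)
  with conv_d.prems(1) show ?case
    by (cases p) (simp_all add: BcAes_Node_Leaf continues_def f01_eq_loses_A f10_eq_loses_B)
next
  case (conv_r sr p sd)
  have "BcAes sr" using conv_r.prems by (auto dest: Always_NodeD intro: conv_r.IH)
  with conv_r.prems(1) show ?case
    by (cases p) (simp_all add: BcAes_Node_Leaf f01_eq_loses_A f10_eq_loses_B)
qed

lemma SAcBes_if_A_continues:
  assumes "comb s" "SPE s" "Always (continues A) s"
  shows "SAcBes s"
  unfolding SAcBes_def using assms
proof (rule Always_along_comb)
  show "Always (continues A) s'" if "Always (continues A) (Node p c (Leaf (loses p)) s')"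
    for p c s'
    using that by (blast dest: Always_NodeD)
  show "AcBes s" if "comb s" "SPE s" "Always (continues A) s" for s
    using that by (blast intro: AcBes_if_A_continues SPE_conv)
qed simp

lemma SBcAes_if_B_continues:
  assumes "comb s" "SPE s" "Always (continues B) s"
  shows "SBcAes s"
  unfolding SBcAes_def using assms
proof (rule Always_along_comb)
  show "Always (continues B) s'" if "Always (continues B) (Node p c (Leaf (loses p)) s')"
    for p c s'
    using that by (blast dest: Always_NodeD)
  show "BcAes s" if "comb s" "SPE s" "Always (continues B) s" for s
    using that by (blast intro: BcAes_if_B_continues SPE_conv)
qed simp

theorem mainTheorem11:
  fixes s :: strat
  assumes "S0 s \<or> S1 s"
    and "SPE s"
  shows "SAcBes s \<or> SBcAes s"
proof -
  have comb: "comb s" using assms(1) by (rule comb_if_S0_or_S1)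
  obtain q where q: "payoff s = loses q"
    using payoff_conv_comb[OF SPE_conv[OF assms(2)] comb] by blast
  show ?thesis
  proof (cases q)
    case A
    then have "Always (continues B) s"
      using Always_continues_if_payoff_nonpos[OF comb assms(2)] q by (simp add: loses_def)
    then show ?thesis using SBcAes_if_B_continues comb assms(2) by blast
  next
    case B
    then have "Always (continues A) s"
      using Always_continues_if_payoff_nonpos[OF comb assms(2)] q by (simp add: loses_def)
    then show ?thesis using SAcBes_if_A_continues comb assms(2) by blast
  qed
qed

end
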